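(* There exist a positive integer $N$ and a doubly-stochastic $N\times N$ matrix $A$ such that $$\mathrm{per}(A)\ <\ SD(A):=\prod_{1\le j\le N}\ \sum_{1\le i\le N}A(i,j)\prod_{m\ne i}\bigl(1-A(m,j)\bigr).$$
   Context: A doubly-stochastic matrix is an entrywise non-negative square matrix all of whose row and column sums equal $1$; $\mathrm{per}$ is the permanent. *)

theory Defs
  imports "HOL-Combinatorics.Permutations" Complex_Main
begin

text \<open>Square N x N real matrices are represented as functions nat => nat => real,
  with indices ranging over {0..<N}; entries outside this range are irrelevant.\<close>

definition doubly_stochastic :: "nat \<Rightarrow> (nat \<Rightarrow> nat \<Rightarrow> real) \<Rightarrow> bool" where
  "doubly_stochastic N A \<longleftrightarrow>
     (\<forall>i<N. \<forall>j<N. A i j \<ge> 0) \<and>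
     (\<forall>i<N. (\<Sum>j<N. A i j) = 1) \<and>
     (\<forall>j<N. (\<Sum>i<N. A i j) = 1)"

definition per :: "nat \<Rightarrow> (nat \<Rightarrow> nat \<Rightarrow> real) \<Rightarrow> real" where
  "per N A = (\<Sum>\<sigma> | \<sigma> permutes {..<N}. \<Prod>i<N. A i (\<sigma> i))"

definition SD :: "nat \<Rightarrow> (nat \<Rightarrow> nat \<Rightarrow> real) \<Rightarrow> real" where
  "SD N A = (\<Prod>j<N. \<Sum>i<N. A i j * (\<Prod>m\<in>{..<N} - {i}. 1 - A m j))"

end

theory Submission
  imports Defs
begin

text \<open>The counterexample is the arrowhead matrix of order \<open>n + 1\<close> with zero corner, border
  entries \<open>1/n\<close> and diagonal entries \<open>1 - 1/n\<close>. Only the \<open>n\<close> transpositions \<open>(0 j)\<close> contribute to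
  its permanent, so \<open>per = (1 - 1/n)^(n-1) / n\<close>, while the column factors of \<open>SD\<close> are
  \<open>(1 - 1/n)^(n-1)\<close> for the border column and \<open>1/n^2 + (1 - 1/n)^2\<close> for each of the others.
  Thus \<open>per < SD\<close> amounts to \<open>1/n < (1/n^2 + (1 - 1/n)^2)^n\<close>, which holds for \<open>n = 8\<close>
  (but not yet for \<open>n = 7\<close>).\<close>

definition arrowhead :: "nat \<Rightarrow> nat \<Rightarrow> nat \<Rightarrow> real" where
  "arrowhead n i j =
     (if i = 0 \<and> j = 0 then 0 else if i = 0 \<or> j = 0 then 1 / n else if i = j then 1 - 1 / n else 0)"

lemma arrowhead_sym: "arrowhead n i j = arrowhead n j i"
  by (auto simp: arrowhead_def)

lemma doubly_stochastic_arrowhead: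
  assumes "n \<ge> 1"
  shows "doubly_stochastic (Suc n) (arrowhead n)"
proof -
  have row: "(\<Sum>j<Suc n. arrowhead n i j) = 1" if "i < Suc n" for i
  proof (cases "i = 0")
    case True
    then show ?thesis using assms by (subst sum.lessThan_Suc_shift) (simp add: arrowhead_def)
  next
    case False
    have "(\<Sum>j<Suc n. arrowhead n i j) = (\<Sum>j\<in>{0, i}. arrowhead n i j)"
      using that False by (intro sum.mono_neutral_right) (auto simp: arrowhead_def)
    then show ?thesis using False by (simp add: arrowhead_def)
  qed
  moreover have "arrowhead n i j \<ge> 0" for i j
    using assms by (auto simp: arrowhead_def)
  ultimately show ?thesis
    by (simp add: doubly_stochastic_def arrowhead_sym[of n _ "j" for j] del: sum.lessThan_Suc)
qed

lemma arrowhead_permutation_support: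
  assumes perm: "\<sigma> permutes {..<Suc n}"
    and nonzero: "(\<Prod>i<Suc n. arrowhead n i (\<sigma> i)) \<noteq> 0"
  shows "\<sigma> 0 \<in> {1..n} \<and> \<sigma> = transpose 0 (\<sigma> 0)"
proof -
  define j where "j = \<sigma> 0"
  have entry: "arrowhead n i (\<sigma> i) \<noteq> 0" if "i < Suc n" for i
    using nonzero that by (simp del: prod.lessThan_Suc)
  have inj: "inj \<sigma>" using perm permutes_inj by blast
  have j: "j \<in> {1..n}"
    using entry[of 0] permutes_in_image[OF perm, of 0]
    by (auto simp: j_def arrowhead_def split: if_splits)
  have row: "\<sigma> i = 0 \<or> \<sigma> i = i" if "0 < i" "i < Suc n" for i
    using entry[OF that(2)] that(1) by (auto simp: arrowhead_def split: if_splits)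
  have "\<sigma> j \<noteq> \<sigma> 0" using j by (simp add: j_def inj_eq[OF inj])
  then have \<sigma>_j: "\<sigma> j = 0" using row[of j] j by (auto simp: j_def)
  have "\<sigma> i = transpose 0 j i" for i
  proof -
    consider "i = 0" | "i = j" | "i \<notin> {0, j}" "i < Suc n" | "i \<notin> {..<Suc n}" by force
    then show ?thesis
    proof cases
      case 3
      then have "\<sigma> i \<noteq> \<sigma> j" by (simp add: inj_eq[OF inj])
      then show ?thesis using row[of i] 3 \<sigma>_j by auto
    next
      case 4
      then show ?thesis using permutes_not_in[OF perm] j by auto
    qed (simp_all add: j_def[symmetric] \<sigma>_j)
  qed
  then have "\<sigma> = transpose 0 j" by blast
  with j show ?thesis unfolding j_def[symmetric] by blast
qed

lemma prod_arrowhead_transpose: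
  assumes "j \<in> {1..n}"
  shows "(\<Prod>i<Suc n. arrowhead n i (transpose 0 j i)) = (1 / n)^2 * (1 - 1 / n)^(n - 1)"
proof -
  let ?R = "{..<Suc n} - {0, j}"
  have split: "{..<Suc n} = insert 0 (insert j ?R)" using assms by auto
  have "card ?R = n - 1" using assms by (simp add: card_Diff_subset)
  moreover have "(\<Prod>i\<in>?R. arrowhead n i (transpose 0 j i)) = (\<Prod>i\<in>?R. 1 - 1 / n)"
    by (rule prod.cong) (auto simp: arrowhead_def)
  ultimately show ?thesis
    using assms by (subst split) (simp add: arrowhead_def power2_eq_square)
qed

lemma per_arrowhead:
  assumes "n \<ge> 1"
  shows "per (Suc n) (arrowhead n) = (1 - 1 / n)^(n - 1) / n"
proof -
  let ?g = "\<lambda>\<sigma>. \<Prod>i<Suc n. arrowhead n i (\<sigma> i)"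
  let ?T = "transpose 0 ` {1..n}"
  have support: "?g \<sigma> = 0" if "\<sigma> permutes {..<Suc n}" "\<sigma> \<notin> ?T" for \<sigma>
    using arrowhead_permutation_support[OF that(1)] that(2) by (metis image_eqI)
  have "per (Suc n) (arrowhead n) = sum ?g ?T"
    unfolding per_def using support
    by (intro sum.mono_neutral_right) (auto intro!: finite_permutations permutes_swap_id)
  also have "\<dots> = (\<Sum>j\<in>{1..n}. ?g (transpose 0 j))"
    by (intro sum.reindex[unfolded comp_def] inj_onI) (metis transpose_eq_iff)
  also have "\<dots> = n * ((1 / n)^2 * (1 - 1 / n)^(n - 1))"
    by (simp add: prod_arrowhead_transpose del: prod.lessThan_Suc)
  finally show ?thesis using assms by (simp add: power2_eq_square)
qed

lemma arrowhead_SD_column_zero: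
  assumes "n \<ge> 1"
  shows "(\<Sum>i<Suc n. arrowhead n i 0 * (\<Prod>m\<in>{..<Suc n} - {i}. 1 - arrowhead n m 0))
    = (1 - 1 / n)^(n - 1)"
proof -
  have border: "(\<Prod>m\<in>{..<Suc n} - {i}. 1 - arrowhead n m 0) = (1 - 1 / n)^(n - 1)"
    if "i \<in> {1..n}" for i
  proof -
    have "(\<Prod>m\<in>{..<Suc n} - {i}. 1 - arrowhead n m 0)
        = (1 - arrowhead n 0 0) * (\<Prod>m\<in>{..<Suc n} - {i} - {0}. 1 - arrowhead n m 0)"
      using that by (intro prod.remove) auto
    also have "\<dots> = (\<Prod>m\<in>{..<Suc n} - {i} - {0}. 1 - 1 / n)"
      by (auto simp: arrowhead_def intro!: prod.cong)
    also have "\<dots> = (1 - 1 / n)^(n - 1)"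
      using that by (simp add: card_Diff_singleton_if)
    finally show ?thesis .
  qed
  have "(\<Sum>i<Suc n. arrowhead n i 0 * (\<Prod>m\<in>{..<Suc n} - {i}. 1 - arrowhead n m 0))
      = (\<Sum>i\<in>{1..n}. arrowhead n i 0 * (\<Prod>m\<in>{..<Suc n} - {i}. 1 - arrowhead n m 0))"
    by (intro sum.mono_neutral_right) (auto simp: arrowhead_def)
  also have "\<dots> = (\<Sum>i\<in>{1..n}. 1 / n * (1 - 1 / n)^(n - 1))"
    by (intro sum.cong refl) (simp add: border, simp add: arrowhead_def)
  finally show ?thesis using assms by simp
qed

lemma arrowhead_SD_column:
  assumes "j \<in> {1..n}"
  shows "(\<Sum>i<Suc n. arrowhead n i j * (\<Prod>m\<in>{..<Suc n} - {i}. 1 - arrowhead n m j))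
    = (1 / n)^2 + (1 - 1 / n)^2"
proof -
  have top:
    "(\<Prod>m\<in>{..<Suc n} - {0}. 1 - arrowhead n m j) = (\<Prod>m\<in>{j}. 1 - arrowhead n m j)"
    using assms by (intro prod.mono_neutral_right) (auto simp: arrowhead_def)
  have diagonal:
    "(\<Prod>m\<in>{..<Suc n} - {j}. 1 - arrowhead n m j) = (\<Prod>m\<in>{0}. 1 - arrowhead n m j)"
    using assms by (intro prod.mono_neutral_right) (auto simp: arrowhead_def)
  have "(\<Sum>i<Suc n. arrowhead n i j * (\<Prod>m\<in>{..<Suc n} - {i}. 1 - arrowhead n m j))
      = (\<Sum>i\<in>{0, j}. arrowhead n i j * (\<Prod>m\<in>{..<Suc n} - {i}. 1 - arrowhead n m j))"
    using assms by (intro sum.mono_neutral_right) (auto simp: arrowhead_def)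
  also have "\<dots> = arrowhead n 0 j * (\<Prod>m\<in>{..<Suc n} - {0}. 1 - arrowhead n m j)
      + arrowhead n j j * (\<Prod>m\<in>{..<Suc n} - {j}. 1 - arrowhead n m j)"
    using assms by simp
  also have "\<dots> = (1 / n)^2 + (1 - 1 / n)^2"
    unfolding top diagonal using assms by (simp add: arrowhead_def power2_eq_square)
  finally show ?thesis .
qed

lemma SD_arrowhead:
  assumes "n \<ge> 1"
  shows "SD (Suc n) (arrowhead n) = (1 - 1 / n)^(n - 1) * ((1 / n)^2 + (1 - 1 / n)^2)^n"
proof -
  have "(\<Prod>j<n. \<Sum>i<Suc n.
        arrowhead n i (Suc j) * (\<Prod>m\<in>{..<Suc n} - {i}. 1 - arrowhead n m (Suc j)))
      = (\<Prod>j<n. (1 / n)^2 + (1 - 1 / n)^2)"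
    by (intro prod.cong refl arrowhead_SD_column) auto
  then show ?thesis
    unfolding SD_def prod.lessThan_Suc_shift arrowhead_SD_column_zero[OF assms] by simp
qed

theorem mainTheorem16:
  shows "\<exists>N::nat. N > 0 \<and> (\<exists>A. doubly_stochastic N A \<and> per N A < SD N A)"
proof -
  have "per (Suc 8) (arrowhead 8) < SD (Suc 8) (arrowhead 8)"
    using per_arrowhead[of 8] SD_arrowhead[of 8] by (simp add: power_divide)
  then show ?thesis
    using doubly_stochastic_arrowhead[of 8] by (intro exI[of _ "Suc 8"]) auto
qed

end
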